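(* Let $n\ge1$ and let $\lambda_1,\dots,\lambda_n$ be distinct complex numbers with $\mathrm{Re}(\lambda_j)>-1/2$ for all $j$. Then for every Müntz polynomial $P(x)=\sum_{j=1}^na_jx^{\lambda_j}$ ($x\in(0,1]$) with $a_j\in\mathbb{C}$, $$\|xP'(x)\|_{L_2[0,1]} \le \left(\max_{1\le j\le n}|\lambda_j| + \left(\sum_{j=1}^n\left(1+2\mathrm{Re}(\lambda_j)\right)\sum_{k=j+1}^n\left(1+2\mathrm{Re}(\lambda_k)\right)\right)^{1/2}\right)\|P\|_{L_2[0,1]}.$$
   Context: $x^{\lambda}:=e^{\lambda\log x}$ for $x\in(0,1]$; $\|g\|_{L_2[0,1]}=(\int_0^1|g(x)|^2dx)^{1/2}$. *)

theory Defs
  imports "HOL-Analysis.Analysis"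
begin

definition rpow_c :: "real \<Rightarrow> complex \<Rightarrow> complex" where
  "rpow_c x l = exp (l * complex_of_real (ln x))"

definition muntz :: "nat \<Rightarrow> (nat \<Rightarrow> complex) \<Rightarrow> (nat \<Rightarrow> complex) \<Rightarrow> real \<Rightarrow> complex" where
  "muntz n a lam x = (\<Sum>j=1..n. a j * rpow_c x (lam j))"

text \<open>L2[0,1] norm (Lebesgue measure; the endpoint 0 is a null set).\<close>
definition L2_norm01 :: "(real \<Rightarrow> complex) \<Rightarrow> real" where
  "L2_norm01 g = sqrt (LINT x:{0<..1}|lborel. (cmod (g x))^2)"

end

theory Submission
  imports Defs
begin

text \<open>
  For coefficient vectors c, d let P_c = \<Sum>_j c_j x^(\<lambda>_j). The L2[0,1] inner product of
  P_c and P_d is the Hermitian form G(c,d) = \<Sum>_(j,k) c_j cnj(d_k) / (1 + \<lambda>_j + cnj(\<lambda>_k)),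
  and x P_c' = P_(\<Lambda>c) with (\<Lambda>c)_j = \<lambda>_j c_j. Integration by parts gives
  G(\<Lambda>c,d) + G(c,\<Lambda>d) + G(c,d) = P_c(1) cnj(P_d(1)).

  With the weights a_j = 1 + 2 Re \<lambda>_j, let K_m = \<Sum>_(j\<le>m) a_j and S_m = \<Sum>_(j<k\<le>m) a_j a_k.
  Induct on the number m of exponents, proving for c supported in {1..m} both
  |\<Lambda>c| \<le> (max |\<lambda>_j| + sqrt S_m) |c| and |P_c(1)|^2 \<le> K_m |c|^2. Let u be the
  Gram-Schmidt direction of \<lambda>_(m+1): orthogonal to the first m exponents, with u_(m+1) = 1.
  The identity yields |P_u(1)|^2 = a_(m+1) |u|^2 and |w|^2 = P_u(1) cnj(P_w(1)) for
  w = (\<Lambda> - \<lambda>_(m+1)) u; as w lies in the span of the first m exponents, the second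
  induction hypothesis bounds |w|. Splitting c = Q + c_(m+1) u orthogonally, both bounds
  propagate to m + 1 by the Cauchy-Schwarz inequality in the plane.
\<close>

lemma norm_rpow_c: "x > 0 \<Longrightarrow> norm (rpow_c x s) = x powr (Re s)"
  by (simp add: rpow_c_def powr_def)

lemma rpow_c_add: "x > 0 \<Longrightarrow> rpow_c x (s + t) = rpow_c x s * rpow_c x t"
  by (simp add: rpow_c_def ring_distribs exp_add)

lemma rpow_c_one: "x > 0 \<Longrightarrow> rpow_c x 1 = of_real x"
  by (simp add: rpow_c_def exp_of_real)

lemma cnj_rpow_c: "cnj (rpow_c x s) = rpow_c x (cnj s)"
  by (simp add: rpow_c_def exp_cnj)

lemma has_vector_derivative_rpow_c:
  assumes x: "x > 0"
  shows "((\<lambda>x. rpow_c x s) has_vector_derivative (s * rpow_c x s / of_real x)) (at x)"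
proof -
  have "((\<lambda>z. exp (s * ln z)) has_field_derivative (exp (s * ln (of_real x)) * (s * inverse (of_real x))))
      (at (of_real x))"
    using x by (auto intro!: derivative_eq_intros simp: complex_nonpos_Reals_iff)
  from has_vector_derivative_real_field[OF this]
  have "((\<lambda>y. exp (s * ln (of_real y))) has_vector_derivative (s * rpow_c x s / of_real x)) (at x)"
    using x by (simp add: rpow_c_def Ln_of_real field_simps)
  then show ?thesis
    by (rule has_vector_derivative_transform_within_open[where S="{0<..}"])
      (use x in \<open>auto simp: rpow_c_def Ln_of_real\<close>)
qed

lemma borel_measurable_rpow_c [measurable]: "(\<lambda>x. rpow_c x s) \<in> borel_measurable borel"
proof -
  have "(\<lambda>z::complex. exp z) \<in> borel_measurable borel"
    by (intro borel_measurable_continuous_onI continuous_intros)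
  moreover have "(\<lambda>x::real. s * complex_of_real (ln x)) \<in> borel_measurable borel"
    by measurable
  ultimately show ?thesis
    using measurable_compose by (fastforce simp: rpow_c_def o_def)
qed

lemma set_integrable_powr_01:
  fixes a :: real
  assumes "a > -1"
  shows "set_integrable lborel {0<..<1} (\<lambda>x. x powr a)"
proof -
  have "set_integrable lborel (einterval 0 1) (\<lambda>x. x powr a)"
  proof (rule interval_integral_FTC_nonneg(1)[where F="\<lambda>x. x powr (a+1) / (a+1)" and A=0 and B="1/(a+1)"])
    fix x :: real assume "0 < ereal x" "ereal x < 1"
    then have x: "0 < x" by (simp add: zero_ereal_def)
    show "((\<lambda>x. x powr (a+1) / (a+1)) has_real_derivative x powr a) (at x)"
      using has_real_derivative_powr[OF x, of "a+1"] assms x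
      by (auto intro!: derivative_eq_intros)
    show "isCont (\<lambda>x. x powr a) x"
      using x by (auto intro!: continuous_intros)
  next
    show "(((\<lambda>x. x powr (a+1) / (a+1)) \<circ> real_of_ereal) \<longlongrightarrow> 0) (at_right 0)"
      using assms unfolding zero_ereal_def ereal_tendsto_simps
      by (auto intro!: tendsto_eq_intros eventually_at_rightI[of 0 1])
    show "(((\<lambda>x. x powr (a+1) / (a+1)) \<circ> real_of_ereal) \<longlongrightarrow> 1/(a+1)) (at_left 1)"
      using assms unfolding one_ereal_def ereal_tendsto_simps
      by (auto intro!: tendsto_eq_intros)
  qed simp_all
  then show ?thesis by (simp add: zero_ereal_def one_ereal_def)
qed

lemma rpow_c_integral_01:
  assumes s: "Re s > -1"
  shows "set_integrable lborel {0<..1} (\<lambda>x. rpow_c x s)"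
    and "(LINT x:{0<..1}|lborel. rpow_c x s) = 1 / (s + 1)"
proof -
  have open_integrable: "set_integrable lborel {0<..<1} (\<lambda>x. rpow_c x s)"
    by (rule set_integrable_bound[OF set_integrable_powr_01[of "Re s"]])
      (use s in \<open>auto simp: set_borel_measurable_def norm_rpow_c\<close>)
  then show "set_integrable lborel {0<..1} (\<lambda>x. rpow_c x s)"
    by (subst set_integrable_discrete_difference[where X="{1}"]) auto
  have s1: "s + 1 \<noteq> 0"
    using s by (auto simp: complex_eq_iff)
  have "(LBINT x=0..1. rpow_c x s) = 1/(s+1) - 0"
  proof (rule interval_integral_FTC_integrable[where F="\<lambda>x. rpow_c x (s+1) / (s+1)"])
    fix x :: real assume "0 < ereal x" "ereal x < 1"
    then have x: "0 < x" by (simp add: zero_ereal_def)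
    have "((\<lambda>x. rpow_c x (s+1) / (s+1)) has_vector_derivative ((s+1) * rpow_c x (s+1) / of_real x) / (s+1)) (at x)"
      using has_vector_derivative_rpow_c[OF x, of "s+1"] by (intro derivative_eq_intros) auto
    then show "((\<lambda>x. rpow_c x (s+1) / (s+1)) has_vector_derivative rpow_c x s) (at x)"
      using x s1 by (simp add: rpow_c_add rpow_c_one)
    show "isCont (\<lambda>x. rpow_c x s) x"
      using x unfolding rpow_c_def by (auto intro!: continuous_intros)
  next
    show "set_integrable lborel (einterval 0 1) (\<lambda>x. rpow_c x s)"
      using open_integrable by (simp add: zero_ereal_def one_ereal_def)
    have "((\<lambda>x. x powr (Re s + 1) / cmod (s+1)) \<longlongrightarrow> 0) (at_right 0)"
      using s s1 by (auto intro!: tendsto_eq_intros eventually_at_rightI[of 0 1])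
    moreover have "eventually (\<lambda>x. x powr (Re s + 1) / cmod (s+1) = norm (rpow_c x (s+1) / (s+1))) (at_right 0)"
      by (rule eventually_at_rightI[of 0 1]) (auto simp: norm_rpow_c norm_divide)
    ultimately have "((\<lambda>x. rpow_c x (s+1) / (s+1)) \<longlongrightarrow> 0) (at_right 0)"
      using Lim_transform_eventually tendsto_norm_zero_iff by fastforce
    then show "(((\<lambda>x. rpow_c x (s+1) / (s+1)) \<circ> real_of_ereal) \<longlongrightarrow> 0) (at_right 0)"
      unfolding zero_ereal_def ereal_tendsto_simps .
    have "isCont (\<lambda>x. rpow_c x (s+1) / (s+1)) 1"
      using s1 unfolding rpow_c_def by (auto intro!: continuous_intros)
    then have "((\<lambda>x. rpow_c x (s+1) / (s+1)) \<longlongrightarrow> 1/(s+1)) (at_left 1)"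
      by (simp add: isCont_def filterlim_at_split rpow_c_def)
    then show "(((\<lambda>x. rpow_c x (s+1) / (s+1)) \<circ> real_of_ereal) \<longlongrightarrow> 1/(s+1)) (at_left 1)"
      unfolding one_ereal_def ereal_tendsto_simps .
  qed simp
  then show "(LINT x:{0<..1}|lborel. rpow_c x s) = 1 / (s + 1)"
    using interval_integral_Ioc[of 0 1 "\<lambda>x. rpow_c x s"]
    by (simp add: zero_ereal_def[symmetric] one_ereal_def[symmetric])
qed

lemma set_integrable_sum:
  fixes f :: "'i \<Rightarrow> 'a \<Rightarrow> 'b::{banach, second_countable_topology}"
  assumes "\<And>i. i \<in> I \<Longrightarrow> set_integrable M A (f i)"
  shows "set_integrable M A (\<lambda>x. \<Sum>i\<in>I. f i x)"
  using assms unfolding set_integrable_def by (simp add: scaleR_sum_right)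

lemma set_integral_sum:
  fixes f :: "'i \<Rightarrow> 'a \<Rightarrow> 'b::{banach, second_countable_topology}"
  assumes "\<And>i. i \<in> I \<Longrightarrow> set_integrable M A (f i)"
  shows "(LINT x:A|M. (\<Sum>i\<in>I. f i x)) = (\<Sum>i\<in>I. LINT x:A|M. f i x)"
  using assms unfolding set_integrable_def set_lebesgue_integral_def
  by (simp add: scaleR_sum_right Bochner_Integration.integral_sum)


lemma sqrt_weighted_sum_square_le:
  fixes A B x y :: real
  assumes "A \<ge> 0" "B \<ge> 0"
  shows "(sqrt A * x + sqrt B * y)^2 \<le> (A + B) * (x^2 + y^2)"
proof -
  have "0 \<le> (sqrt A * y - sqrt B * x)^2" by simp
  then show ?thesis
    using assms by (simp add: power2_eq_square algebra_simps)
qed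

lemma markov_step_inequality:
  fixes M S T x y :: real
  assumes "M \<ge> 0" "S \<ge> 0" "T \<ge> 0" "x \<ge> 0" "y \<ge> 0"
  shows "((M + sqrt S) * x + sqrt T * y)^2 + M^2 * y^2 \<le> (M + sqrt (S + T))^2 * (x^2 + y^2)"
proof -
  define N where "N = sqrt (x^2 + y^2)"
  define v where "v = sqrt S * x + sqrt T * y"
  have N2: "N^2 = x^2 + y^2"
    by (simp add: N_def)
  have xN: "x \<le> N"
    unfolding N_def by (rule real_le_rsqrt) simp
  have v0: "v \<ge> 0"
    using assms by (simp add: v_def)
  have "v^2 \<le> (sqrt (S + T) * N)^2"
    using sqrt_weighted_sum_square_le[OF assms(2,3), of x y] assms
    by (simp add: v_def power_mult_distrib N2)
  then have vN: "v \<le> sqrt (S + T) * N"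
    using v0 assms by (simp add: N_def power2_le_iff_abs_le)
  have "((M + sqrt S) * x + sqrt T * y)^2 + M^2 * y^2 = M^2 * N^2 + 2 * M * x * v + v^2"
    unfolding N2 v_def by (simp add: power2_eq_square algebra_simps)
  also have "\<dots> \<le> M^2 * N^2 + 2 * M * N * v + v^2"
    using xN v0 assms by (simp add: mult_right_mono mult_left_mono)
  also have "\<dots> = (M * N + v)^2"
    by (simp add: power2_eq_square algebra_simps)
  also have "\<dots> \<le> (M * N + sqrt (S + T) * N)^2"
    using vN v0 assms by (intro power_mono) (auto simp: N_def)
  also have "\<dots> = (M + sqrt (S + T))^2 * N^2"
    by (simp only: power2_eq_square algebra_simps)
  also have "\<dots> = (M + sqrt (S + T))^2 * (x^2 + y^2)"
    by (simp only: N2)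
  finally show ?thesis .
qed

lemma sum_upper_pairs_Suc:
  fixes a :: "nat \<Rightarrow> real"
  shows "(\<Sum>j=1..Suc m. a j * (\<Sum>k=j+1..Suc m. a k))
    = (\<Sum>j=1..m. a j * (\<Sum>k=j+1..m. a k)) + a (Suc m) * (\<Sum>j=1..m. a j)"
proof -
  have "(\<Sum>j=1..Suc m. a j * (\<Sum>k=j+1..Suc m. a k)) = (\<Sum>j=1..m. a j * (\<Sum>k=j+1..Suc m. a k))"
    by simp
  also have "\<dots> = (\<Sum>j=1..m. a j * (\<Sum>k=j+1..m. a k) + a j * a (Suc m))"
    by (intro sum.cong refl) (simp add: algebra_simps)
  also have "\<dots> = (\<Sum>j=1..m. a j * (\<Sum>k=j+1..m. a k)) + a (Suc m) * (\<Sum>j=1..m. a j)"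
    by (simp add: sum.distrib sum_distrib_left mult.commute)
  finally show ?thesis .
qed

definition muntz_gram ::
    "nat \<Rightarrow> (nat \<Rightarrow> complex) \<Rightarrow> (nat \<Rightarrow> complex) \<Rightarrow> (nat \<Rightarrow> complex) \<Rightarrow> complex" where
  "muntz_gram n lam c d = (\<Sum>j=1..n. \<Sum>k=1..n. c j * cnj (d k) / (1 + lam j + cnj (lam k)))"

lemma muntz_gram_add_left: "muntz_gram n lam (\<lambda>j. c j + d j) e = muntz_gram n lam c e + muntz_gram n lam d e"
  by (simp add: muntz_gram_def ring_distribs add_divide_distrib sum.distrib)

lemma muntz_gram_add_right: "muntz_gram n lam e (\<lambda>j. c j + d j) = muntz_gram n lam e c + muntz_gram n lam e d"
  by (simp add: muntz_gram_def ring_distribs add_divide_distrib sum.distrib)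

lemma muntz_gram_diff_left: "muntz_gram n lam (\<lambda>j. c j - d j) e = muntz_gram n lam c e - muntz_gram n lam d e"
  by (simp add: muntz_gram_def ring_distribs diff_divide_distrib sum_subtractf)

lemma muntz_gram_scale_left: "muntz_gram n lam (\<lambda>j. b * c j) d = b * muntz_gram n lam c d"
  by (simp add: muntz_gram_def sum_distrib_left mult_ac)

lemma muntz_gram_scale_right: "muntz_gram n lam c (\<lambda>j. b * d j) = cnj b * muntz_gram n lam c d"
  by (simp add: muntz_gram_def sum_distrib_left mult_ac)

lemma muntz_gram_commute: "muntz_gram n lam d c = cnj (muntz_gram n lam c d)"
  unfolding muntz_gram_def cnj_sum by (subst sum.swap) (simp add: add_ac mult.commute)

lemma muntz_gram_zero_right: "\<forall>j\<in>{1..n}. d j = 0 \<Longrightarrow> muntz_gram n lam c d = 0"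
  by (simp add: muntz_gram_def)

lemma muntz_mult_cnj:
  "x > 0 \<Longrightarrow> muntz n c lam x * cnj (muntz n d lam x) =
    (\<Sum>j=1..n. \<Sum>k=1..n. c j * cnj (d k) * rpow_c x (lam j + cnj (lam k)))"
  by (simp add: muntz_def sum_product cnj_rpow_c rpow_c_add mult_ac)

lemma of_real_mult_deriv_muntz:
  assumes x: "x > 0"
  shows "of_real x * vector_derivative (muntz n a lam) (at x) = muntz n (\<lambda>j. lam j * a j) lam x"
proof -
  have "(muntz n a lam has_vector_derivative (\<Sum>j=1..n. a j * (lam j * rpow_c x (lam j) / of_real x))) (at x)"
    unfolding muntz_def
    by (intro has_vector_derivative_sum has_vector_derivative_mult_right has_vector_derivative_rpow_c[OF x])
  then show ?thesis
    using x by (simp add: vector_derivative_at muntz_def sum_distrib_left mult_ac)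
qed

lemma L2_norm01_cong: "(\<And>x. x \<in> {0<..1} \<Longrightarrow> f x = g x) \<Longrightarrow> L2_norm01 f = L2_norm01 g"
  unfolding L2_norm01_def by (subst set_lebesgue_integral_cong[where g="\<lambda>x. (cmod (g x))^2"]) auto

locale muntz_exponents =
  fixes n :: nat and lam :: "nat \<Rightarrow> complex"
  assumes Re_exponent_gt: "\<forall>j\<in>{1..n}. Re (lam j) > -1/2"
begin

abbreviation gram :: "(nat \<Rightarrow> complex) \<Rightarrow> (nat \<Rightarrow> complex) \<Rightarrow> complex" where
  "gram \<equiv> muntz_gram n lam"

definition sqnorm :: "(nat \<Rightarrow> complex) \<Rightarrow> real" where
  "sqnorm c = Re (gram c c)"

lemma Re_exponent_pair_gt:
  assumes "j \<in> {1..n}" "k \<in> {1..n}"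
  shows "Re (lam j + cnj (lam k)) > -1"
proof -
  have "Re (lam j) > -1/2" "Re (lam k) > -1/2"
    using Re_exponent_gt assms by auto
  then show ?thesis by simp
qed

lemma set_integral_muntz_mult_cnj:
  shows "set_integrable lborel {0<..1} (\<lambda>x. muntz n c lam x * cnj (muntz n d lam x))"
    and "(LINT x:{0<..1}|lborel. muntz n c lam x * cnj (muntz n d lam x)) = gram c d"
proof -
  let ?g = "\<lambda>x. \<Sum>j=1..n. \<Sum>k=1..n. c j * cnj (d k) * rpow_c x (lam j + cnj (lam k))"
  have term_integrable: "set_integrable lborel {0<..1} (\<lambda>x. c j * cnj (d k) * rpow_c x (lam j + cnj (lam k)))"
    and term_integral: "(LINT x:{0<..1}|lborel. rpow_c x (lam j + cnj (lam k))) = 1 / (1 + lam j + cnj (lam k))"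
    if "j \<in> {1..n}" "k \<in> {1..n}" for j k
    using rpow_c_integral_01[OF Re_exponent_pair_gt[OF that]] by (simp_all add: add_ac)
  have row_integrable: "set_integrable lborel {0<..1}
      (\<lambda>x. \<Sum>k=1..n. c j * cnj (d k) * rpow_c x (lam j + cnj (lam k)))" if "j \<in> {1..n}" for j
    using that by (intro set_integrable_sum term_integrable)
  have row_integral: "(LINT x:{0<..1}|lborel. \<Sum>k=1..n. c j * cnj (d k) * rpow_c x (lam j + cnj (lam k)))
      = (\<Sum>k=1..n. c j * cnj (d k) / (1 + lam j + cnj (lam k)))" if j: "j \<in> {1..n}" for j
  proof -
    have "(LINT x:{0<..1}|lborel. \<Sum>k=1..n. c j * cnj (d k) * rpow_c x (lam j + cnj (lam k)))
        = (\<Sum>k=1..n. LINT x:{0<..1}|lborel. c j * cnj (d k) * rpow_c x (lam j + cnj (lam k)))"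
      by (rule set_integral_sum) (rule term_integrable[OF j])
    also have "\<dots> = (\<Sum>k=1..n. c j * cnj (d k) / (1 + lam j + cnj (lam k)))"
      by (rule sum.cong[OF refl]) (simp add: term_integral[OF j])
    finally show ?thesis .
  qed
  have g_integrable: "set_integrable lborel {0<..1} ?g"
    by (intro set_integrable_sum row_integrable)
  have "(LINT x:{0<..1}|lborel. ?g x)
      = (\<Sum>j=1..n. LINT x:{0<..1}|lborel. \<Sum>k=1..n. c j * cnj (d k) * rpow_c x (lam j + cnj (lam k)))"
    by (rule set_integral_sum) (rule row_integrable)
  also have "\<dots> = gram c d"
    unfolding muntz_gram_def by (rule sum.cong[OF refl]) (rule row_integral)
  finally have g_integral: "(LINT x:{0<..1}|lborel. ?g x) = gram c d" .
  have product_eq: "\<And>x. x \<in> {0<..1} \<Longrightarrow> muntz n c lam x * cnj (muntz n d lam x) = ?g x"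
    using muntz_mult_cnj by auto
  show "set_integrable lborel {0<..1} (\<lambda>x. muntz n c lam x * cnj (muntz n d lam x))"
  proof -
    have "set_integrable lborel {0<..1} (\<lambda>x. muntz n c lam x * cnj (muntz n d lam x))
        = set_integrable lborel {0<..1} ?g"
      by (rule set_integrable_cong) (auto simp: product_eq)
    then show ?thesis using g_integrable by simp
  qed
  show "(LINT x:{0<..1}|lborel. muntz n c lam x * cnj (muntz n d lam x)) = gram c d"
  proof -
    have "(LINT x:{0<..1}|lborel. muntz n c lam x * cnj (muntz n d lam x)) = (LINT x:{0<..1}|lborel. ?g x)"
      by (rule set_lebesgue_integral_cong) (auto simp: product_eq)
    then show ?thesis using g_integral by simp
  qed
qed

lemma of_real_L2_integral_muntz:
  "complex_of_real (LINT x:{0<..1}|lborel. (cmod (muntz n c lam x))^2) = gram c c"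
proof -
  have "complex_of_real (LINT x:{0<..1}|lborel. (cmod (muntz n c lam x))^2)
      = (LINT x:{0<..1}|lborel. complex_of_real ((cmod (muntz n c lam x))^2))"
    by (rule set_integral_complex_of_real[symmetric])
  also have "\<dots> = (LINT x:{0<..1}|lborel. muntz n c lam x * cnj (muntz n c lam x))"
    by (simp only: complex_norm_square)
  finally show ?thesis
    using set_integral_muntz_mult_cnj(2) by simp
qed

lemma L2_norm01_muntz: "L2_norm01 (muntz n c lam) = sqrt (sqnorm c)"
  unfolding L2_norm01_def sqnorm_def of_real_L2_integral_muntz[symmetric] by simp

lemma sqnorm_nonneg: "sqnorm c \<ge> 0"
proof -
  have "(LINT x:{0<..1}|lborel. (cmod (muntz n c lam x))^2) \<ge> 0"
    unfolding set_lebesgue_integral_def by (rule integral_nonneg_AE) (auto simp: indicator_def)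
  then show ?thesis
    unfolding sqnorm_def of_real_L2_integral_muntz[symmetric] by simp
qed

lemma gram_self: "gram c c = of_real (sqnorm c)"
  using muntz_gram_commute[of n lam c c] unfolding sqnorm_def by (simp add: complex_eq_iff)

text \<open>The Euler operator x d/dx acts on coefficients, since x (x^\<lambda>)' = \<lambda> x^\<lambda>.\<close>

definition euler :: "(nat \<Rightarrow> complex) \<Rightarrow> nat \<Rightarrow> complex" where
  "euler c = (\<lambda>j. lam j * c j)"

definition value_at_one :: "(nat \<Rightarrow> complex) \<Rightarrow> complex" where
  "value_at_one c = (\<Sum>j=1..n. c j)"

text \<open>Integration by parts: (x P_c') cnj P_d + P_c (x cnj P_d') + P_c cnj P_d = (x P_c cnj P_d)'.\<close>

lemma gram_euler_identity:
  "gram (euler c) d + gram c (euler d) + gram c d = value_at_one c * cnj (value_at_one d)"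
proof -
  have denom_nonzero: "1 + lam j + cnj (lam k) \<noteq> 0" if "j \<in> {1..n}" "k \<in> {1..n}" for j k
    using Re_exponent_pair_gt[OF that] by (auto simp: complex_eq_iff)
  have "gram (euler c) d + gram c (euler d) + gram c d =
     (\<Sum>j=1..n. \<Sum>k=1..n. (lam j * c j * cnj (d k) + c j * cnj (lam k * d k) + c j * cnj (d k))
        / (1 + lam j + cnj (lam k)))"
    unfolding muntz_gram_def euler_def sum.distrib[symmetric] add_divide_distrib ..
  also have "\<dots> = (\<Sum>j=1..n. \<Sum>k=1..n. c j * cnj (d k))"
  proof (intro sum.cong refl)
    fix j k assume "j \<in> {1..n}" "k \<in> {1..n}"
    then show "(lam j * c j * cnj (d k) + c j * cnj (lam k * d k) + c j * cnj (d k))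
        / (1 + lam j + cnj (lam k)) = c j * cnj (d k)"
      using denom_nonzero by (simp add: field_simps)
  qed
  also have "\<dots> = value_at_one c * cnj (value_at_one d)"
    by (simp add: value_at_one_def sum_product)
  finally show ?thesis .
qed

lemma sqnorm_add_scaled:
  "sqnorm (\<lambda>j. c j + t * d j) = sqnorm c + 2 * Re (cnj t * gram c d) + (cmod t)^2 * sqnorm d"
proof -
  have "gram (\<lambda>j. c j + t * d j) (\<lambda>j. c j + t * d j)
      = gram c c + cnj t * gram c d + t * cnj (gram c d) + (t * cnj t) * gram d d"
    by (simp add: muntz_gram_add_left muntz_gram_add_right muntz_gram_scale_left
        muntz_gram_scale_right muntz_gram_commute[of n lam d c] algebra_simps)
  moreover have "Re ((t * cnj t) * gram d d) = (cmod t)^2 * sqnorm d"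
    by (simp add: gram_self[of d] complex_norm_square[symmetric])
  ultimately show ?thesis
    unfolding sqnorm_def by simp
qed

lemma sqnorm_scale: "sqnorm (\<lambda>j. b * c j) = (cmod b)^2 * sqnorm c"
  using sqnorm_add_scaled[of "\<lambda>_. 0" b c] by (simp add: sqnorm_def muntz_gram_def)

lemma gram_Cauchy_Schwarz: "(cmod (gram c d))^2 \<le> sqnorm c * sqnorm d"
proof (cases "sqnorm d = 0")
  case True
  \<comment> \<open>sqnorm (c - s G(c,d) d) \<ge> 0 for all real s forces G(c,d) = 0\<close>
  show ?thesis
  proof (rule ccontr)
    assume "\<not> ?thesis"
    then have pos: "cmod (gram c d) > 0"
      using True by (simp add: sqnorm_nonneg)
    define s where "s = (sqnorm c + 1) / (2 * (cmod (gram c d))^2)"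
    have "0 \<le> sqnorm (\<lambda>j. c j + (- of_real s * gram c d) * d j)"
      by (rule sqnorm_nonneg)
    also have "\<dots> = sqnorm c - 2 * s * (cmod (gram c d))^2"
      using True sqnorm_add_scaled[of c "- of_real s * gram c d" d] cmod_power2[of "gram c d"]
      by (simp add: power2_eq_square algebra_simps)
    also have "\<dots> = -1"
      using pos by (simp add: s_def field_simps)
    finally show False by simp
  qed
next
  case False
  then have pos: "sqnorm d > 0"
    using sqnorm_nonneg[of d] by simp
  define t where "t = - gram c d / of_real (sqnorm d)"
  have "0 \<le> sqnorm (\<lambda>j. c j + t * d j)"
    by (rule sqnorm_nonneg)
  also have "\<dots> = sqnorm c - (cmod (gram c d))^2 / sqnorm d"
    using pos sqnorm_add_scaled[of c t d] cmod_power2[of "gram c d"]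
    by (simp add: t_def norm_divide power2_eq_square)
  finally show ?thesis
    using pos by (simp add: field_simps)
qed

lemma sqrt_sqnorm_add_le: "sqrt (sqnorm (\<lambda>j. c j + d j)) \<le> sqrt (sqnorm c) + sqrt (sqnorm d)"
proof -
  have "sqnorm (\<lambda>j. c j + d j) = sqnorm c + 2 * Re (gram c d) + sqnorm d"
    using sqnorm_add_scaled[of c 1 d] by simp
  also have "Re (gram c d) \<le> cmod (gram c d)"
    by (rule complex_Re_le_cmod)
  also have "cmod (gram c d) \<le> sqrt (sqnorm c) * sqrt (sqnorm d)"
    using gram_Cauchy_Schwarz[of c d] sqnorm_nonneg[of c] sqnorm_nonneg[of d]
    by (metis real_le_rsqrt real_sqrt_mult)
  finally have "sqnorm (\<lambda>j. c j + d j) \<le> (sqrt (sqnorm c) + sqrt (sqnorm d))^2"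
    using sqnorm_nonneg[of c] sqnorm_nonneg[of d] by (simp add: power2_sum)
  then show ?thesis
    by (simp add: real_le_lsqrt sqnorm_nonneg)
qed


definition supp_upto :: "nat \<Rightarrow> (nat \<Rightarrow> complex) set" where
  "supp_upto m = {c. \<forall>j\<in>{1..n}. m < j \<longrightarrow> c j = 0}"

lemma supp_upto_add: "c \<in> supp_upto m \<Longrightarrow> d \<in> supp_upto m \<Longrightarrow> (\<lambda>j. c j + d j) \<in> supp_upto m"
  by (auto simp: supp_upto_def)

lemma supp_upto_scale: "c \<in> supp_upto m \<Longrightarrow> (\<lambda>j. b * c j) \<in> supp_upto m"
  by (auto simp: supp_upto_def)

lemma supp_upto_euler: "c \<in> supp_upto m \<Longrightarrow> euler c \<in> supp_upto m"
  by (simp add: supp_upto_def euler_def)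

lemma supp_upto_mono: "c \<in> supp_upto m \<Longrightarrow> m \<le> m' \<Longrightarrow> c \<in> supp_upto m'"
  by (auto simp: supp_upto_def)

lemma supp_upto_SucD: "c \<in> supp_upto (Suc m) \<Longrightarrow> c (Suc m) = 0 \<Longrightarrow> c \<in> supp_upto m"
  unfolding supp_upto_def using Suc_lessI by fastforce

lemma supp_upto_eliminate:
  "u \<in> supp_upto (Suc m) \<Longrightarrow> u (Suc m) = 1 \<Longrightarrow> c \<in> supp_upto (Suc m) \<Longrightarrow>
    (\<lambda>j. c j - c (Suc m) * u j) \<in> supp_upto m"
  by (rule supp_upto_SucD) (auto simp: supp_upto_def)

lemma gram_zero_supp_upto_0: "d \<in> supp_upto 0 \<Longrightarrow> gram c d = 0"
  by (rule muntz_gram_zero_right) (auto simp: supp_upto_def)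

lemma new_direction_exists:
  assumes projection: "\<And>f. \<exists>q\<in>supp_upto m. \<forall>g\<in>supp_upto m. gram (\<lambda>j. f j - q j) g = 0"
    and "Suc m \<le> n"
  shows "\<exists>u\<in>supp_upto (Suc m). u (Suc m) = 1 \<and> (\<forall>g\<in>supp_upto m. gram u g = 0)"
proof -
  define e where "e = (\<lambda>j. if j = Suc m then 1 else (0::complex))"
  obtain p where "p \<in> supp_upto m" "\<forall>g\<in>supp_upto m. gram (\<lambda>j. e j - p j) g = 0"
    using projection by blast
  then show ?thesis
    using assms(2) by (intro bexI[of _ "\<lambda>j. e j - p j"]) (auto simp: supp_upto_def e_def)
qed

lemma orthogonal_projection_exists: "\<exists>q\<in>supp_upto m. \<forall>g\<in>supp_upto m. gram (\<lambda>j. f j - q j) g = 0"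
proof (induction m arbitrary: f)
  case 0
  show ?case
    by (rule bexI[of _ "\<lambda>j. 0"]) (auto simp: supp_upto_def gram_zero_supp_upto_0)
next
  case (Suc m)
  show ?case
  proof (cases "n \<le> m")
    case True
    then have "supp_upto (Suc m) = supp_upto m"
      by (auto simp: supp_upto_def)
    then show ?thesis
      using Suc.IH[of f] by simp
  next
    case False
    obtain u where u: "u \<in> supp_upto (Suc m)" "u (Suc m) = 1" "\<forall>g\<in>supp_upto m. gram u g = 0"
      using new_direction_exists[OF Suc.IH] False by auto
    obtain q where q: "q \<in> supp_upto m" "\<forall>g\<in>supp_upto m. gram (\<lambda>j. f j - q j) g = 0"
      using Suc.IH by blast
    define r where "r = (\<lambda>j. f j - q j)"
    define \<alpha> where "\<alpha> = (if sqnorm u = 0 then 0 else gram r u / of_real (sqnorm u))"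
    have residual: "(\<lambda>j. f j - (q j + \<alpha> * u j)) = (\<lambda>j. r j - \<alpha> * u j)"
      by (auto simp: r_def)
    have orth_old: "gram (\<lambda>j. r j - \<alpha> * u j) h = 0" if "h \<in> supp_upto m" for h
      using q(2) u(3) that by (simp add: r_def muntz_gram_diff_left muntz_gram_scale_left)
    have "gram (\<lambda>j. r j - \<alpha> * u j) u = gram r u - \<alpha> * of_real (sqnorm u)"
      by (simp only: muntz_gram_diff_left muntz_gram_scale_left gram_self)
    moreover have "gram r u = 0" if "sqnorm u = 0"
      using gram_Cauchy_Schwarz[of r u] that by simp
    ultimately have orth_new: "gram (\<lambda>j. r j - \<alpha> * u j) u = 0"
      by (simp add: \<alpha>_def)
    show ?thesis
    proof (rule bexI)
      show "(\<lambda>j. q j + \<alpha> * u j) \<in> supp_upto (Suc m)"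
        by (intro supp_upto_add supp_upto_scale u(1) supp_upto_mono[OF q(1)]) simp
      show "\<forall>g\<in>supp_upto (Suc m). gram (\<lambda>j. f j - (q j + \<alpha> * u j)) g = 0"
      proof
        fix g assume g: "g \<in> supp_upto (Suc m)"
        define h where "h = (\<lambda>j. g j - g (Suc m) * u j)"
        have "h \<in> supp_upto m"
          unfolding h_def by (rule supp_upto_eliminate[OF u(1,2) g])
        moreover have "g = (\<lambda>j. h j + g (Suc m) * u j)"
          by (simp add: h_def)
        then have "gram (\<lambda>j. r j - \<alpha> * u j) g
            = gram (\<lambda>j. r j - \<alpha> * u j) h + cnj (g (Suc m)) * gram (\<lambda>j. r j - \<alpha> * u j) u"
          by (metis muntz_gram_add_right muntz_gram_scale_right)
        ultimately show "gram (\<lambda>j. f j - (q j + \<alpha> * u j)) g = 0"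
          unfolding residual using orth_old orth_new by simp
      qed
    qed
  qed
qed


definition weight :: "nat \<Rightarrow> real" where
  "weight j = 1 + 2 * Re (lam j)"

definition weight_sum :: "nat \<Rightarrow> real" where
  "weight_sum m = (\<Sum>j=1..m. weight j)"

definition weight_pair_sum :: "nat \<Rightarrow> real" where
  "weight_pair_sum m = (\<Sum>j=1..m. weight j * (\<Sum>k=j+1..m. weight k))"

lemma weight_pos: "j \<in> {1..n} \<Longrightarrow> weight j > 0"
  using Re_exponent_gt by (fastforce simp: weight_def)

lemma weight_sum_nonneg: "m \<le> n \<Longrightarrow> weight_sum m \<ge> 0"
  unfolding weight_sum_def by (intro sum_nonneg less_imp_le weight_pos) auto

lemma weight_pair_sum_nonneg: "m \<le> n \<Longrightarrow> weight_pair_sum m \<ge> 0"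
  unfolding weight_pair_sum_def by (intro sum_nonneg mult_nonneg_nonneg less_imp_le weight_pos) auto

lemma weight_sum_Suc: "weight_sum (Suc m) = weight_sum m + weight (Suc m)"
  by (simp add: weight_sum_def)

lemma weight_pair_sum_Suc: "weight_pair_sum (Suc m) = weight_pair_sum m + weight (Suc m) * weight_sum m"
  unfolding weight_pair_sum_def weight_sum_def by (rule sum_upper_pairs_Suc)

lemma value_at_one_add_scaled: "value_at_one (\<lambda>j. c j + b * d j) = value_at_one c + b * value_at_one d"
  by (simp add: value_at_one_def sum.distrib sum_distrib_left)

lemma sqnorm_orthogonal_add:
  assumes "h \<in> supp_upto m" "\<forall>g\<in>supp_upto m. gram u g = 0"
  shows "sqnorm (\<lambda>j. h j + b * u j) = sqnorm h + (cmod b)^2 * sqnorm u"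
proof -
  have "gram h u = 0"
    using assms muntz_gram_commute[of n lam h u] by simp
  then show ?thesis
    by (simp add: sqnorm_add_scaled)
qed

lemma defect_supp_upto: "u \<in> supp_upto (Suc m) \<Longrightarrow> (\<lambda>j. (lam j - lam (Suc m)) * u j) \<in> supp_upto m"
  by (rule supp_upto_SucD) (auto simp: supp_upto_def)

lemma value_at_one_new_direction:
  assumes u: "u \<in> supp_upto (Suc m)" "\<forall>g\<in>supp_upto m. gram u g = 0"
  shows "(cmod (value_at_one u))^2 = weight (Suc m) * sqnorm u"
proof -
  define L where "L = lam (Suc m)"
  define w where "w = (\<lambda>j. (lam j - L) * u j)"
  have "w \<in> supp_upto m"
    unfolding w_def L_def using u(1) by (rule defect_supp_upto)
  then have "gram w u = 0"
    using u(2) muntz_gram_commute[of n lam w u] by simp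
  moreover have "euler u = (\<lambda>j. w j + L * u j)"
    by (auto simp: euler_def w_def algebra_simps)
  ultimately have euler_u: "gram (euler u) u = L * of_real (sqnorm u)"
    by (simp add: muntz_gram_add_left muntz_gram_scale_left gram_self)
  have u_euler: "gram u (euler u) = cnj (L * of_real (sqnorm u))"
    using muntz_gram_commute[of n lam "euler u" u] euler_u by simp
  have "complex_of_real ((cmod (value_at_one u))^2) = value_at_one u * cnj (value_at_one u)"
    by (rule complex_norm_square)
  also have "\<dots> = L * of_real (sqnorm u) + cnj (L * of_real (sqnorm u)) + of_real (sqnorm u)"
    using gram_euler_identity[of u u] euler_u u_euler by (simp add: gram_self)
  also have "\<dots> = complex_of_real (weight (Suc m) * sqnorm u)"
    by (simp add: complex_eq_iff weight_def L_def algebra_simps)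
  finally show ?thesis
    by (simp only: of_real_eq_iff)
qed

lemma sqnorm_defect_le:
  assumes u: "u \<in> supp_upto (Suc m)" "\<forall>g\<in>supp_upto m. gram u g = 0" "Suc m \<le> n"
    and value_bound: "\<forall>c\<in>supp_upto m. (cmod (value_at_one c))^2 \<le> K * sqnorm c"
    and K: "K \<ge> 0"
  shows "sqnorm (\<lambda>j. (lam j - lam (Suc m)) * u j) \<le> weight (Suc m) * sqnorm u * K"
proof -
  define w where "w = (\<lambda>j. (lam j - lam (Suc m)) * u j)"
  have w: "w \<in> supp_upto m"
    unfolding w_def using u(1) by (rule defect_supp_upto)
  have "euler u = (\<lambda>j. w j + lam (Suc m) * u j)"
    by (auto simp: euler_def w_def algebra_simps)
  then have "gram (euler u) w = gram w w"
    using u(2) w by (simp add: muntz_gram_add_left muntz_gram_scale_left)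
  moreover have "gram u (euler w) = 0" "gram u w = 0"
    using u(2) w supp_upto_euler[OF w] by auto
  ultimately have "gram w w = value_at_one u * cnj (value_at_one w)"
    using gram_euler_identity[of u w] by simp
  then have "sqnorm w \<le> cmod (value_at_one u) * cmod (value_at_one w)"
    using complex_Re_le_cmod[of "value_at_one u * cnj (value_at_one w)"]
    by (simp add: sqnorm_def norm_mult)
  then have "(sqnorm w)^2 \<le> (cmod (value_at_one u))^2 * (cmod (value_at_one w))^2"
    using power_mono[of _ _ 2] sqnorm_nonneg[of w] by (fastforce simp: power_mult_distrib)
  also have "\<dots> = (weight (Suc m) * sqnorm u) * (cmod (value_at_one w))^2"
    using value_at_one_new_direction[OF u(1,2)] by simp
  also have "\<dots> \<le> (weight (Suc m) * sqnorm u) * (K * sqnorm w)"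
    using value_bound w weight_pos[of "Suc m"] u(3)
    by (intro mult_left_mono) (auto simp: sqnorm_nonneg less_imp_le)
  finally have "sqnorm w * sqnorm w \<le> (weight (Suc m) * sqnorm u * K) * sqnorm w"
    by (simp add: power2_eq_square algebra_simps)
  moreover have "0 \<le> weight (Suc m) * sqnorm u * K"
    using weight_pos[of "Suc m"] u(3) K sqnorm_nonneg[of u] by simp
  ultimately have "sqnorm w \<le> weight (Suc m) * sqnorm u * K"
    using sqnorm_nonneg[of w] by (cases "sqnorm w = 0") (auto simp: mult_le_cancel_right)
  then show ?thesis
    by (simp add: w_def)
qed


lemma sqnorm_euler_bound_Suc:
  assumes M: "M \<ge> 0" "\<forall>j\<in>{1..n}. cmod (lam j) \<le> M" and m: "Suc m \<le> n"
    and u: "u \<in> supp_upto (Suc m)" "u (Suc m) = 1" "\<forall>g\<in>supp_upto m. gram u g = 0"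
    and euler_bound: "\<forall>c\<in>supp_upto m. sqnorm (euler c) \<le> (M + sqrt (weight_pair_sum m))^2 * sqnorm c"
    and value_bound: "\<forall>c\<in>supp_upto m. (cmod (value_at_one c))^2 \<le> weight_sum m * sqnorm c"
    and c: "c \<in> supp_upto (Suc m)"
  shows "sqnorm (euler c) \<le> (M + sqrt (weight_pair_sum (Suc m)))^2 * sqnorm c"
proof -
  define S K a where "S = weight_pair_sum m" and "K = weight_sum m" and "a = weight (Suc m)"
  have S: "S \<ge> 0" and K: "K \<ge> 0" and a: "a \<ge> 0"
    using m weight_pair_sum_nonneg weight_sum_nonneg weight_pos[of "Suc m"]
    by (auto simp: S_def K_def a_def)
  define Q where "Q = (\<lambda>j. c j - c (Suc m) * u j)"
  define w where "w = (\<lambda>j. (lam j - lam (Suc m)) * u j)"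
  define A where "A = (\<lambda>j. euler Q j + c (Suc m) * w j)"
  have Q: "Q \<in> supp_upto m"
    unfolding Q_def by (rule supp_upto_eliminate[OF u(1,2) c])
  have w: "w \<in> supp_upto m"
    unfolding w_def by (rule defect_supp_upto[OF u(1)])
  have A: "A \<in> supp_upto m"
    unfolding A_def by (intro supp_upto_add supp_upto_scale supp_upto_euler Q w)
  have c_split: "c = (\<lambda>j. Q j + c (Suc m) * u j)"
    by (simp add: Q_def)
  have norm_c: "sqnorm c = sqnorm Q + (cmod (c (Suc m)))^2 * sqnorm u"
    using sqnorm_orthogonal_add[OF Q u(3), of "c (Suc m)"] by (simp only: c_split[symmetric])
  have "euler c = (\<lambda>j. A j + (c (Suc m) * lam (Suc m)) * u j)"
    by (auto simp: A_def Q_def euler_def w_def algebra_simps)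
  then have norm_euler_c: "sqnorm (euler c) = sqnorm A + (cmod (c (Suc m) * lam (Suc m)))^2 * sqnorm u"
    using sqnorm_orthogonal_add[OF A u(3)] by simp
  define x y where "x = sqrt (sqnorm Q)" and "y = cmod (c (Suc m)) * sqrt (sqnorm u)"
  have x: "x \<ge> 0" "x^2 = sqnorm Q" and y: "y \<ge> 0" "y^2 = (cmod (c (Suc m)))^2 * sqnorm u"
    by (auto simp: x_def y_def sqnorm_nonneg power_mult_distrib)
  have "sqrt (sqnorm (euler Q)) \<le> sqrt ((M + sqrt S)^2 * sqnorm Q)"
    using euler_bound Q by (simp add: S_def)
  also have "\<dots> = (M + sqrt S) * x"
    using M S by (simp add: real_sqrt_mult x_def)
  finally have euler_Q: "sqrt (sqnorm (euler Q)) \<le> (M + sqrt S) * x" .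
  have "sqnorm (\<lambda>j. c (Suc m) * w j) \<le> (cmod (c (Suc m)))^2 * (a * sqnorm u * K)"
    using sqnorm_defect_le[OF u(1,3) m value_bound weight_sum_nonneg] m
    by (simp add: sqnorm_scale w_def a_def K_def mult_left_mono)
  also have "\<dots> = (sqrt (a * K) * y)^2"
    using a K by (simp add: y_def power_mult_distrib sqnorm_nonneg)
  finally have defect: "sqrt (sqnorm (\<lambda>j. c (Suc m) * w j)) \<le> sqrt (a * K) * y"
    using a K y by (simp add: real_le_lsqrt)
  have "sqrt (sqnorm A) \<le> (M + sqrt S) * x + sqrt (a * K) * y"
    using sqrt_sqnorm_add_le[of "euler Q" "\<lambda>j. c (Suc m) * w j"] euler_Q defect
    unfolding A_def by linarith
  then have "(sqrt (sqnorm A))^2 \<le> ((M + sqrt S) * x + sqrt (a * K) * y)^2"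
    by (rule power_mono) (simp add: sqnorm_nonneg)
  then have norm_A: "sqnorm A \<le> ((M + sqrt S) * x + sqrt (a * K) * y)^2"
    using sqnorm_nonneg[of A] by simp
  have "(cmod (lam (Suc m)))^2 \<le> M^2"
    using M m by (intro power_mono) auto
  then have "(cmod (lam (Suc m)))^2 * ((cmod (c (Suc m)))^2 * sqnorm u)
      \<le> M^2 * ((cmod (c (Suc m)))^2 * sqnorm u)"
    by (rule mult_right_mono) (simp add: sqnorm_nonneg)
  then have lead: "(cmod (c (Suc m) * lam (Suc m)))^2 * sqnorm u \<le> M^2 * y^2"
    by (simp add: y norm_mult power_mult_distrib mult_ac)
  have "sqnorm (euler c) \<le> ((M + sqrt S) * x + sqrt (a * K) * y)^2 + M^2 * y^2"
    using norm_euler_c norm_A lead by linarith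
  also have "\<dots> \<le> (M + sqrt (S + a * K))^2 * (x^2 + y^2)"
    using M a K S x y by (intro markov_step_inequality) auto
  also have "\<dots> = (M + sqrt (weight_pair_sum (Suc m)))^2 * sqnorm c"
    using x y norm_c by (simp add: weight_pair_sum_Suc S_def K_def a_def)
  finally show ?thesis .
qed

lemma value_at_one_bound_Suc:
  assumes m: "Suc m \<le> n"
    and u: "u \<in> supp_upto (Suc m)" "u (Suc m) = 1" "\<forall>g\<in>supp_upto m. gram u g = 0"
    and value_bound: "\<forall>c\<in>supp_upto m. (cmod (value_at_one c))^2 \<le> weight_sum m * sqnorm c"
    and c: "c \<in> supp_upto (Suc m)"
  shows "(cmod (value_at_one c))^2 \<le> weight_sum (Suc m) * sqnorm c"
proof -
  define K a where "K = weight_sum m" and "a = weight (Suc m)"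
  have K: "K \<ge> 0" and a: "a \<ge> 0"
    using m weight_sum_nonneg weight_pos[of "Suc m"] by (auto simp: K_def a_def)
  define Q where "Q = (\<lambda>j. c j - c (Suc m) * u j)"
  have Q: "Q \<in> supp_upto m"
    unfolding Q_def by (rule supp_upto_eliminate[OF u(1,2) c])
  have c_split: "c = (\<lambda>j. Q j + c (Suc m) * u j)"
    by (simp add: Q_def)
  have norm_c: "sqnorm c = sqnorm Q + (cmod (c (Suc m)))^2 * sqnorm u"
    using sqnorm_orthogonal_add[OF Q u(3), of "c (Suc m)"] by (simp only: c_split[symmetric])
  define x y where "x = sqrt (sqnorm Q)" and "y = cmod (c (Suc m)) * sqrt (sqnorm u)"
  have x: "x^2 = sqnorm Q" and y: "y^2 = (cmod (c (Suc m)))^2 * sqnorm u"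
    by (auto simp: x_def y_def sqnorm_nonneg power_mult_distrib)
  have "cmod (value_at_one Q) \<le> sqrt (K * sqnorm Q)"
    using value_bound Q by (simp add: K_def real_le_rsqrt)
  then have value_Q: "cmod (value_at_one Q) \<le> sqrt K * x"
    by (simp add: real_sqrt_mult x_def)
  have "cmod (value_at_one u) = sqrt (a * sqnorm u)"
    using value_at_one_new_direction[OF u(1,3)] by (simp add: a_def real_sqrt_unique)
  then have value_u: "cmod (c (Suc m)) * cmod (value_at_one u) = sqrt a * y"
    by (simp add: y_def real_sqrt_mult)
  have "cmod (value_at_one c) \<le> cmod (value_at_one Q) + cmod (c (Suc m)) * cmod (value_at_one u)"
    by (subst c_split) (simp add: value_at_one_add_scaled norm_triangle_le norm_mult)
  then have "cmod (value_at_one c) \<le> sqrt K * x + sqrt a * y"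
    using value_Q value_u by linarith
  then have "(cmod (value_at_one c))^2 \<le> (sqrt K * x + sqrt a * y)^2"
    by (rule power_mono) simp
  also have "\<dots> \<le> (K + a) * (x^2 + y^2)"
    using K a by (rule sqrt_weighted_sum_square_le)
  also have "\<dots> = weight_sum (Suc m) * sqnorm c"
    using x y norm_c by (simp add: weight_sum_Suc K_def a_def)
  finally show ?thesis .
qed

lemma markov_bounds:
  assumes M: "M \<ge> 0" "\<forall>j\<in>{1..n}. cmod (lam j) \<le> M"
  shows "m \<le> n \<Longrightarrow> c \<in> supp_upto m \<Longrightarrow>
    sqnorm (euler c) \<le> (M + sqrt (weight_pair_sum m))^2 * sqnorm c \<and>
    (cmod (value_at_one c))^2 \<le> weight_sum m * sqnorm c"
proof (induction m arbitrary: c)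
  case 0
  have "sqnorm (euler c) = 0"
    using gram_zero_supp_upto_0[OF supp_upto_euler[OF "0.prems"(2)]] by (simp add: sqnorm_def)
  moreover have "value_at_one c = 0"
    using "0.prems"(2) by (simp add: supp_upto_def value_at_one_def)
  ultimately show ?case
    using sqnorm_nonneg[of c] by (simp add: weight_sum_def)
next
  case (Suc m)
  obtain u where u: "u \<in> supp_upto (Suc m)" "u (Suc m) = 1" "\<forall>g\<in>supp_upto m. gram u g = 0"
    using new_direction_exists[OF orthogonal_projection_exists Suc.prems(1)] by blast
  have "\<forall>c\<in>supp_upto m. sqnorm (euler c) \<le> (M + sqrt (weight_pair_sum m))^2 * sqnorm c"
    and "\<forall>c\<in>supp_upto m. (cmod (value_at_one c))^2 \<le> weight_sum m * sqnorm c"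
    using Suc.IH Suc.prems(1) by auto
  then show ?case
    using sqnorm_euler_bound_Suc[OF M Suc.prems(1) u] value_at_one_bound_Suc[OF Suc.prems(1) u]
      Suc.prems(2) by blast
qed

end


theorem lemma12p12:
  fixes n :: nat and lam a :: "nat \<Rightarrow> complex"
  assumes "n \<ge> 1"
    and "inj_on lam {1..n}"
    and "\<forall>j\<in>{1..n}. Re (lam j) > -1/2"
  shows "L2_norm01 (\<lambda>x. complex_of_real x * vector_derivative (muntz n a lam) (at x))
    \<le> (Max ((\<lambda>j. cmod (lam j)) ` {1..n})
        + sqrt (\<Sum>j=1..n. (1 + 2 * Re (lam j)) * (\<Sum>k=j+1..n. (1 + 2 * Re (lam k)))))
      * L2_norm01 (muntz n a lam)"
proof -
  interpret muntz_exponents n lam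
    by unfold_locales (rule assms(3))
  define M where "M = Max ((\<lambda>j. cmod (lam j)) ` {1..n})"
  have M_ge: "\<forall>j\<in>{1..n}. cmod (lam j) \<le> M"
    unfolding M_def by simp
  have "cmod (lam 1) \<le> M"
    using M_ge assms(1) by simp
  then have M: "M \<ge> 0"
    using norm_ge_zero[of "lam 1"] by linarith
  have "sqnorm (euler a) \<le> (M + sqrt (weight_pair_sum n))^2 * sqnorm a"
    using markov_bounds[OF M M_ge le_refl] by (simp add: supp_upto_def)
  then have "sqrt (sqnorm (euler a)) \<le> sqrt ((M + sqrt (weight_pair_sum n))^2 * sqnorm a)"
    by (rule real_sqrt_le_mono)
  also have "\<dots> = (M + sqrt (weight_pair_sum n)) * sqrt (sqnorm a)"
    using M weight_pair_sum_nonneg[of n] by (simp add: real_sqrt_mult)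
  also have "L2_norm01 (\<lambda>x. of_real x * vector_derivative (muntz n a lam) (at x))
      = L2_norm01 (muntz n (euler a) lam)"
    by (rule L2_norm01_cong) (simp add: of_real_mult_deriv_muntz euler_def)
  ultimately show ?thesis
    by (simp add: M_def L2_norm01_muntz weight_pair_sum_def weight_def)
qed

end
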